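(* Let $\mathcal{C}$ be a finite set of classes and let $(\ell_\star, \ell_a, \ell_b)$ be a random tuple of $\mathcal{C}$-valued labels ($\ell_\star$ the oracle label) such that for every $\mathcal{C}$-valued random variable $\ell_\times$ with $\ell_\times \ne \ell_\star$ almost surely, $\mathbb{P}(\ell_b = \ell_\star \mid \ell_a \ne \ell_\star) \ge \mathbb{P}(\ell_b = \ell_\times \mid \ell_a \ne \ell_\star)$. Let $(\ell_\star^{(n)}, \ell_a^{(n)}, \ell_b^{(n)})$, $n = 1, \dots, N$, be $N$ independent copies of this tuple, and let $\mathbb{P}^{(N)}(\ell_a = \ell_b) = \frac{1}{N}\sum_{n=1}^N [\ell_a^{(n)} = \ell_b^{(n)}]$. Then for every $t_l > 0$, with probability at least $1 - \delta_l$ where $\delta_l = \exp(-2 N t_l^2)$, $$\mathbb{P}^{(N)}(\ell_a = \ell_b) \le t_l + \mathbb{P}(\ell_b = \ell_\star).$$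
   Context: $[\cdot]$ denotes the Iverson bracket. Conditional probabilities given an event of probability zero are taken to be $0$. *)

theory Defs
  imports "HOL-Probability.Probability"
begin

definition cond_prob :: "'a measure \<Rightarrow> 'a set \<Rightarrow> 'a set \<Rightarrow> real" where
  "cond_prob M A B = (if measure M B = 0 then 0 else measure M (A \<inter> B) / measure M B)"

end

theory Submission
  imports Defs
begin

text \<open>
  On the event B = {la \<noteq> ls} both sides can be compared through the hypothesis: the label
  that equals la on B and is some wrong label elsewhere is almost surely wrong, so on B the
  classifier lb agrees with la at most as often as it agrees with the oracle ls. Off B the
  events {la = lb} and {lb = ls} coincide. Hence P(la = lb) \<le> P(lb = ls), and the empirical
  agreement rate of N independent copies exceeds P(la = lb) + t with probability at most
  exp (-2 N t^2) by Hoeffding's inequality for the indicators of {la = lb}.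
\<close>

lemma measurable_Pair_count_space:
  assumes "countable A" "countable B"
    and "f \<in> M \<rightarrow>\<^sub>M count_space A" "g \<in> M \<rightarrow>\<^sub>M count_space B"
  shows "(\<lambda>x. (f x, g x)) \<in> M \<rightarrow>\<^sub>M count_space (A \<times> B)"
  using measurable_Pair[OF assms(3,4)] by (simp add: pair_measure_countable assms(1,2))

lemma pred_count_space_eq:
  assumes "countable C" "f \<in> M \<rightarrow>\<^sub>M count_space C" "g \<in> M \<rightarrow>\<^sub>M count_space C"
  shows "Measurable.pred M (\<lambda>x. f x = g x)"
proof -
  have "(\<lambda>x. (f x, g x)) \<in> M \<rightarrow>\<^sub>M count_space (C \<times> C)"
    using assms(1,1,2,3) by (rule measurable_Pair_count_space)
  then have "(\<lambda>x. (f x, g x)) -` {p \<in> C \<times> C. fst p = snd p} \<inter> space M \<in> sets M"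
    by (rule measurable_sets) auto
  also have "(\<lambda>x. (f x, g x)) -` {p \<in> C \<times> C. fst p = snd p} \<inter> space M = {x \<in> space M. f x = g x}"
    using measurable_space[OF assms(2)] measurable_space[OF assms(3)] by auto
  finally show ?thesis
    by (simp add: pred_def)
qed

lemma measure_Int_eq_cond_prob:
  assumes "finite_measure M" "A \<in> sets M" "B \<in> sets M"
  shows "measure M (A \<inter> B) = cond_prob M A B * measure M B"
proof (cases "measure M B = 0")
  case True
  then have "measure M (A \<inter> B) = 0"
    using assms finite_measure.finite_measure_mono[of M "A \<inter> B" B] measure_nonneg[of M "A \<inter> B"]
    by auto
  with True show ?thesis by (simp add: cond_prob_def)
qed (simp add: cond_prob_def)

lemma (in finite_measure) prob_labels_agree_le_prob_correct:
  fixes ls la lb :: "'a \<Rightarrow> 'c"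
  assumes C: "countable C"
    and ls: "ls \<in> M \<rightarrow>\<^sub>M count_space C"
    and la: "la \<in> M \<rightarrow>\<^sub>M count_space C"
    and lb: "lb \<in> M \<rightarrow>\<^sub>M count_space C"
    and hyp: "\<forall>lx. lx \<in> measurable M (count_space C) \<longrightarrow> (AE \<omega> in M. lx \<omega> \<noteq> ls \<omega>) \<longrightarrow>
        cond_prob M {\<omega>\<in>space M. lb \<omega> = lx \<omega>} {\<omega>\<in>space M. la \<omega> \<noteq> ls \<omega>}
        \<le> cond_prob M {\<omega>\<in>space M. lb \<omega> = ls \<omega>} {\<omega>\<in>space M. la \<omega> \<noteq> ls \<omega>}"
  shows "measure M {\<omega>\<in>space M. la \<omega> = lb \<omega>} \<le> measure M {\<omega>\<in>space M. lb \<omega> = ls \<omega>}"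
proof -
  define A where "A = {\<omega>\<in>space M. la \<omega> = lb \<omega>}"
  define L where "L = {\<omega>\<in>space M. lb \<omega> = ls \<omega>}"
  define B where "B = {\<omega>\<in>space M. la \<omega> \<noteq> ls \<omega>}"
  have sets: "A \<in> sets M" "L \<in> sets M" "B \<in> sets M"
    using pred_count_space_eq[OF C la lb] pred_count_space_eq[OF C lb ls]
      pred_count_space_eq[OF C la ls]
    by (auto simp: A_def L_def B_def pred_def Collect_neg_eq[symmetric] set_diff_eq[symmetric])
  have "measure M (A \<inter> B) \<le> measure M (L \<inter> B)"
  proof (cases "B = {}")
    case False
    then obtain \<omega>\<^sub>0 where "\<omega>\<^sub>0 \<in> B" by blast
    define c d where "c = la \<omega>\<^sub>0" and "d = ls \<omega>\<^sub>0"
    have cd: "c \<in> C" "d \<in> C" "c \<noteq> d"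
      using \<open>\<omega>\<^sub>0 \<in> B\<close> measurable_space[OF la] measurable_space[OF ls]
      by (auto simp: B_def c_def d_def)
    define lx where "lx \<omega> = (if \<omega> \<in> B then la \<omega> else if ls \<omega> = c then d else c)" for \<omega>
    have "(\<lambda>\<omega>. if ls \<omega> = c then d else c) \<in> M \<rightarrow>\<^sub>M count_space C"
      using cd by (intro measurable_compose[OF ls]) auto
    then have lx_measurable: "lx \<in> M \<rightarrow>\<^sub>M count_space C"
      unfolding lx_def using sets(3) by (intro measurable_If_set la) auto
    have lx_wrong: "AE \<omega> in M. lx \<omega> \<noteq> ls \<omega>"
      using cd by (intro AE_I2) (auto simp: lx_def B_def)
    have "{\<omega>\<in>space M. lb \<omega> = lx \<omega>} \<inter> B = A \<inter> B"
      by (auto simp: A_def B_def lx_def)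
    then have "cond_prob M A B = cond_prob M {\<omega>\<in>space M. lb \<omega> = lx \<omega>} B"
      by (simp only: cond_prob_def)
    also have "\<dots> \<le> cond_prob M L B"
      using hyp lx_measurable lx_wrong unfolding B_def L_def by blast
    finally show ?thesis
      using sets finite_measure_axioms
      by (simp add: measure_Int_eq_cond_prob mult_right_mono)
  qed simp
  moreover have "A - B = L - B"
    by (auto simp: A_def B_def L_def)
  ultimately show ?thesis
    using finite_measure_Diff'[OF sets(1,3)] finite_measure_Diff'[OF sets(2,3)]
    by (simp add: A_def L_def)
qed

lemma sum_indicator_comp_eq_card:
  "finite I \<Longrightarrow> (\<Sum>i\<in>I. indicator E (X i)) = real (card {i\<in>I. X i \<in> E})"
  by (simp add: indicator_def Int_def)

lemma (in prob_space) prob_empirical_frequency_ge: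
  assumes I: "finite I" "I \<noteq> {}"
    and indep: "indep_vars (\<lambda>_. N) X I"
    and distr: "\<And>i. i \<in> I \<Longrightarrow> distr M N (X i) = Q"
    and E: "E \<in> sets N" and \<epsilon>: "\<epsilon> \<ge> 0"
  shows "prob {\<omega>\<in>space M. real (card {i\<in>I. X i \<omega> \<in> E}) / real (card I) \<ge> measure Q E + \<epsilon>}
           \<le> exp (- 2 * real (card I) * \<epsilon>\<^sup>2)"
proof -
  obtain i\<^sub>0 where i\<^sub>0: "i\<^sub>0 \<in> I" using I by blast
  define Z where "Z i = (\<lambda>\<omega>. indicator E (X i \<omega>) :: real)" for i
  have X: "X i \<in> M \<rightarrow>\<^sub>M N" if "i \<in> I" for i
    using indep that by (auto simp: indep_vars_def)
  have distr_Z: "distr M borel (Z i) = distr Q borel (indicator E)" if "i \<in> I" for i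
    using distr_distr[of "indicator E :: _ \<Rightarrow> real" N borel "X i" M] X[OF that] E distr[OF that]
    by (simp add: Z_def comp_def)
  have "expectation (Z i\<^sub>0) = integral\<^sup>L Q (indicator E)"
    using integral_distr[OF X[OF i\<^sub>0], of "indicator E :: _ \<Rightarrow> real"] E distr[OF i\<^sub>0]
    by (simp add: Z_def)
  also have "\<dots> = measure Q E"
    using E distr[OF i\<^sub>0] by auto
  finally have expectation_Z: "expectation (Z i\<^sub>0) = measure Q E" .
  interpret Hoeffding_ineq_iid M I Z "Z i\<^sub>0" 0 1 "measure Q E"
  proof unfold_locales
    show "indep_vars (\<lambda>_. borel) Z I"
      unfolding Z_def using E by (intro indep_vars_compose2[OF indep]) auto
    show "Z i\<^sub>0 \<in> borel_measurable M"
      unfolding Z_def using X[OF i\<^sub>0] E by measurable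
  qed (use I distr_Z i\<^sub>0 expectation_Z in \<open>auto simp: Z_def\<close>)
  show ?thesis
    using Hoeffding_ineq_ge'[of \<epsilon>] \<epsilon> I by (simp add: Z_def sum_indicator_comp_eq_card)
qed

lemma (in prob_space) prob_empirical_frequency_le:
  assumes I: "finite I" "I \<noteq> {}"
    and indep: "indep_vars (\<lambda>_. N) X I"
    and distr: "\<And>i. i \<in> I \<Longrightarrow> distr M N (X i) = Q"
    and E: "E \<in> sets N" and \<epsilon>: "\<epsilon> \<ge> 0" and c: "measure Q E \<le> c"
  shows "prob {\<omega>\<in>space M. real (card {i\<in>I. X i \<omega> \<in> E}) / real (card I) \<le> c + \<epsilon>}
           \<ge> 1 - exp (- 2 * real (card I) * \<epsilon>\<^sup>2)"
proof -
  define freq where "freq \<omega> = real (card {i\<in>I. X i \<omega> \<in> E}) / real (card I)" for \<omega>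
  have [measurable]: "X i \<in> M \<rightarrow>\<^sub>M N" if "i \<in> I" for i
    using indep that by (auto simp: indep_vars_def)
  have [measurable]: "freq \<in> borel_measurable M"
    unfolding freq_def sum_indicator_comp_eq_card[OF I(1), symmetric] using E by measurable
  have "1 - exp (- 2 * real (card I) * \<epsilon>\<^sup>2) \<le> 1 - prob {\<omega>\<in>space M. freq \<omega> \<ge> measure Q E + \<epsilon>}"
    using prob_empirical_frequency_ge[OF I indep distr E \<epsilon>] by (simp add: freq_def)
  also have "\<dots> = prob (space M - {\<omega>\<in>space M. freq \<omega> \<ge> measure Q E + \<epsilon>})"
    by (subst prob_compl) auto
  also have "\<dots> \<le> prob {\<omega>\<in>space M. freq \<omega> \<le> c + \<epsilon>}"
    using c by (intro finite_measure_mono) auto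
  finally show ?thesis
    by (simp add: freq_def)
qed

theorem theorem6:
  fixes M :: "'a measure" and P :: "'b measure" and C :: "'c set"
    and ls la lb :: "'a \<Rightarrow> 'c"
    and X :: "nat \<Rightarrow> 'b \<Rightarrow> 'c \<times> 'c \<times> 'c"
    and N :: nat and t :: real
  assumes M: "prob_space M"
    and C: "finite C"
    and ls: "ls \<in> measurable M (count_space C)"
    and la: "la \<in> measurable M (count_space C)"
    and lb: "lb \<in> measurable M (count_space C)"
    and hyp: "\<forall>lx. lx \<in> measurable M (count_space C) \<longrightarrow> (AE \<omega> in M. lx \<omega> \<noteq> ls \<omega>) \<longrightarrow>
        cond_prob M {\<omega>\<in>space M. lb \<omega> = lx \<omega>} {\<omega>\<in>space M. la \<omega> \<noteq> ls \<omega>}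
        \<le> cond_prob M {\<omega>\<in>space M. lb \<omega> = ls \<omega>} {\<omega>\<in>space M. la \<omega> \<noteq> ls \<omega>}"
    and P: "prob_space P"
    and indep: "prob_space.indep_vars P (\<lambda>_. count_space (C \<times> C \<times> C)) X {1..N}"
    and copies: "\<forall>n\<in>{1..N}. distr P (count_space (C \<times> C \<times> C)) (X n)
                   = distr M (count_space (C \<times> C \<times> C)) (\<lambda>\<omega>. (ls \<omega>, la \<omega>, lb \<omega>))"
    and t: "t > 0"
  shows "measure P {\<omega>\<in>space P.
            (1 / real N) * real (card {n\<in>{1..N}. fst (snd (X n \<omega>)) = snd (snd (X n \<omega>))})
              \<le> t + measure M {\<omega>\<in>space M. lb \<omega> = ls \<omega>}}
         \<ge> 1 - exp (- 2 * real N * t ^ 2)"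
proof (cases "N = 0")
  case True
  then show ?thesis by simp
next
  case False
  interpret M: prob_space M by (fact M)
  interpret P: prob_space P by (fact P)
  define E where "E = {x \<in> C \<times> C \<times> C. fst (snd x) = snd (snd x)}"
  define h where "h = (\<lambda>\<omega>. (ls \<omega>, la \<omega>, lb \<omega>))"
  have h: "h \<in> M \<rightarrow>\<^sub>M count_space (C \<times> C \<times> C)"
    unfolding h_def using C ls la lb
    by (intro measurable_Pair_count_space) (auto simp: countable_finite)
  have "measure (distr M (count_space (C \<times> C \<times> C)) h) E = measure M {\<omega>\<in>space M. la \<omega> = lb \<omega>}"
    using h measurable_space[OF h]
    by (subst measure_distr) (auto simp: E_def h_def intro!: arg_cong[where f="measure M"])
  also have "\<dots> \<le> measure M {\<omega>\<in>space M. lb \<omega> = ls \<omega>}"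
    using C ls la lb hyp by (intro M.prob_labels_agree_le_prob_correct) (auto simp: countable_finite)
  finally have "P.prob {\<omega>\<in>space P. real (card {n\<in>{1..N}. X n \<omega> \<in> E}) / real (card {1..N})
                  \<le> measure M {\<omega>\<in>space M. lb \<omega> = ls \<omega>} + t} \<ge> 1 - exp (- 2 * real (card {1..N}) * t\<^sup>2)"
    using False indep copies t
    by (intro P.prob_empirical_frequency_le[where Q="distr M (count_space (C \<times> C \<times> C)) h"])
      (auto simp: h_def E_def)
  moreover have "X n \<omega> \<in> C \<times> C \<times> C" if "n \<in> {1..N}" "\<omega> \<in> space P" for n \<omega>
    using measurable_space[of "X n" P "count_space (C \<times> C \<times> C)"] indep that
    by (auto simp: P.indep_vars_def)
  ultimately show ?thesis
    by (simp add: E_def add.commute cong: conj_cong)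
qed

end
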